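(* Let $\psi,\varphi$ be CNF formulas that contain no tautological clauses, and let $X\subseteq\mathrm{Vars}(\psi)\cup\mathrm{Vars}(\varphi)$. If $\psi\models\varphi$, then $\psi[Y]\models\varphi[Y]$ for every $Y\in\mathcal{A}_3(X)$.
   Context: A clause is tautological if it contains both $x$ and $\neg x$. An extended literal is a literal or a fresh symbol $x_\varepsilon$ for a variable $x$. For a CNF formula $\phi$: if $\ell$ is a literal, $\phi[\ell]$ deletes all clauses containing $\ell$ and deletes the complementary literal $\sim\!\ell$ from the remaining clauses; $\phi[x_\varepsilon]$ deletes all occurrences of $x$ and $\neg x$ from all clauses. $\mathcal{A}_3(X)$ is the set of all sets $\{a_x : x\in X\}$ with $a_x\in\{x,\neg x,x_\varepsilon\}$; for $Y\in\mathcal{A}_3(X)$, $\phi[Y]$ is the successive application of the reducts by all elements of $Y$ (order irrelevant). *)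

theory Defs
  imports Main
begin

datatype 'v lit = Pos 'v | Neg 'v

datatype 'v elit = Lit "'v lit" | Eps 'v

type_synonym 'v clause = "'v lit set"
type_synonym 'v cnf = "'v clause set"

fun lit_var :: "'v lit \<Rightarrow> 'v" where
  "lit_var (Pos x) = x" | "lit_var (Neg x) = x"

fun compl :: "'v lit \<Rightarrow> 'v lit" where
  "compl (Pos x) = Neg x" | "compl (Neg x) = Pos x"

definition cnf_formula :: "'v cnf \<Rightarrow> bool" where
  "cnf_formula \<phi> \<longleftrightarrow> finite \<phi> \<and> (\<forall>C\<in>\<phi>. finite C)"

definition tautological :: "'v clause \<Rightarrow> bool" where
  "tautological C \<longleftrightarrow> (\<exists>x. Pos x \<in> C \<and> Neg x \<in> C)"

definition vars :: "'v cnf \<Rightarrow> 'v set" where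
  "vars \<phi> = (\<Union>C\<in>\<phi>. lit_var ` C)"

fun lit_sat :: "('v \<Rightarrow> bool) \<Rightarrow> 'v lit \<Rightarrow> bool" where
  "lit_sat \<alpha> (Pos x) = \<alpha> x" | "lit_sat \<alpha> (Neg x) = (\<not> \<alpha> x)"

definition cnf_sat :: "('v \<Rightarrow> bool) \<Rightarrow> 'v cnf \<Rightarrow> bool" where
  "cnf_sat \<alpha> \<phi> \<longleftrightarrow> (\<forall>C\<in>\<phi>. \<exists>l\<in>C. lit_sat \<alpha> l)"

definition entails :: "'v cnf \<Rightarrow> 'v cnf \<Rightarrow> bool" (infix "\<Turnstile>" 50) where
  "\<psi> \<Turnstile> \<phi> \<longleftrightarrow> (\<forall>\<alpha>. cnf_sat \<alpha> \<psi> \<longrightarrow> cnf_sat \<alpha> \<phi>)"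

fun reduct :: "'v cnf \<Rightarrow> 'v elit \<Rightarrow> 'v cnf" where
  "reduct \<phi> (Lit l) = (\<lambda>C. C - {compl l}) ` {C\<in>\<phi>. l \<notin> C}"
| "reduct \<phi> (Eps x) = (\<lambda>C. C - {Pos x, Neg x}) ` \<phi>"

definition reduct_list :: "'v cnf \<Rightarrow> 'v elit list \<Rightarrow> 'v cnf" where
  "reduct_list \<phi> ys = foldl reduct \<phi> ys"

definition A3 :: "'v set \<Rightarrow> 'v elit set set" where
  "A3 X = {Y. \<exists>a. (\<forall>x\<in>X. a x \<in> {Lit (Pos x), Lit (Neg x), Eps x}) \<and> Y = a ` X}"

end

theory Submission
  imports Defs
begin

text \<open>Entailment survives a single reduct, so it survives any sequence of reducts. For a literal
  \<open>l\<close>, extend a model of \<open>\<psi>[l]\<close> by making \<open>l\<close> true: it satisfies \<open>\<psi>\<close>, hence \<open>\<phi>\<close>, and every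
  clause of \<open>\<phi>[l]\<close> keeps the satisfied literal. For \<open>x\<^sub>\<epsilon>\<close>, a model of \<open>\<psi>[x\<^sub>\<epsilon>]\<close> satisfies \<open>\<psi>\<close>
  with \<open>x\<close> set either way; if a clause of \<open>\<phi>\<close> were satisfied in both cases only through \<open>x\<close>, it
  would contain \<open>x\<close> and \<open>\<not>x\<close>. Reducts never create tautological clauses, so this hypothesis
  on \<open>\<phi>\<close> is inherited along the sequence.\<close>

definition make_true :: "('v \<Rightarrow> bool) \<Rightarrow> 'v lit \<Rightarrow> 'v \<Rightarrow> bool" where
  "make_true \<alpha> l = \<alpha>(lit_var l := (case l of Pos _ \<Rightarrow> True | Neg _ \<Rightarrow> False))"

lemma lit_sat_fun_upd_other: "lit_var m \<noteq> x \<Longrightarrow> lit_sat (\<alpha>(x := b)) m = lit_sat \<alpha> m"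
  by (cases m) auto

lemma lit_sat_fun_upd_notin: "m \<notin> {Pos x, Neg x} \<Longrightarrow> lit_sat (\<alpha>(x := b)) m = lit_sat \<alpha> m"
  by (cases m) auto

lemma lit_var_eq_imp: "lit_var m = lit_var l \<Longrightarrow> m = l \<or> m = compl l"
  by (cases m; cases l) auto

lemma lit_sat_make_true: "lit_sat (make_true \<alpha> l) l"
  by (cases l) (auto simp: make_true_def)

lemma not_lit_sat_make_true_compl: "\<not> lit_sat (make_true \<alpha> l) (compl l)"
  by (cases l) (auto simp: make_true_def)

lemma lit_sat_make_true_other:
  "m \<noteq> l \<Longrightarrow> m \<noteq> compl l \<Longrightarrow> lit_sat (make_true \<alpha> l) m = lit_sat \<alpha> m"
  unfolding make_true_def by (metis lit_var_eq_imp lit_sat_fun_upd_other)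

lemma cnf_sat_make_true:
  assumes "cnf_sat \<alpha> (reduct \<psi> (Lit l))"
  shows "cnf_sat (make_true \<alpha> l) \<psi>"
  unfolding cnf_sat_def
proof
  fix C assume C: "C \<in> \<psi>"
  show "\<exists>m\<in>C. lit_sat (make_true \<alpha> l) m"
  proof (cases "l \<in> C")
    case True
    then show ?thesis using lit_sat_make_true by blast
  next
    case False
    then obtain m where "m \<in> C" "m \<noteq> compl l" "lit_sat \<alpha> m"
      using assms C unfolding cnf_sat_def by auto
    with False show ?thesis using lit_sat_make_true_other by metis
  qed
qed

lemma entails_reduct_Lit:
  assumes "\<psi> \<Turnstile> \<phi>"
  shows "reduct \<psi> (Lit l) \<Turnstile> reduct \<phi> (Lit l)"
  unfolding entails_def
proof (intro allI impI)
  fix \<alpha> assume "cnf_sat \<alpha> (reduct \<psi> (Lit l))"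
  then have sat_\<phi>: "cnf_sat (make_true \<alpha> l) \<phi>"
    using assms cnf_sat_make_true unfolding entails_def by blast
  show "cnf_sat \<alpha> (reduct \<phi> (Lit l))"
    unfolding cnf_sat_def
  proof
    fix D assume "D \<in> reduct \<phi> (Lit l)"
    then obtain C where C: "C \<in> \<phi>" "l \<notin> C" "D = C - {compl l}" by auto
    then obtain m where m: "m \<in> C" "lit_sat (make_true \<alpha> l) m"
      using sat_\<phi> unfolding cnf_sat_def by auto
    then have "m \<noteq> compl l" "m \<noteq> l"
      using not_lit_sat_make_true_compl C(2) by auto
    with m C show "\<exists>m\<in>D. lit_sat \<alpha> m" using lit_sat_make_true_other by auto
  qed
qed

lemma cnf_sat_fun_upd_reduct_Eps:
  assumes "cnf_sat \<alpha> (reduct \<psi> (Eps x))"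
  shows "cnf_sat (\<alpha>(x := b)) \<psi>"
  unfolding cnf_sat_def
proof
  fix C assume "C \<in> \<psi>"
  then obtain m where "m \<in> C" "m \<notin> {Pos x, Neg x}" "lit_sat \<alpha> m"
    using assms unfolding cnf_sat_def by auto
  then show "\<exists>m\<in>C. lit_sat (\<alpha>(x := b)) m" using lit_sat_fun_upd_notin by metis
qed

lemma entails_reduct_Eps:
  assumes "\<psi> \<Turnstile> \<phi>" and non_taut: "\<forall>C\<in>\<phi>. \<not> tautological C"
  shows "reduct \<psi> (Eps x) \<Turnstile> reduct \<phi> (Eps x)"
  unfolding entails_def
proof (intro allI impI)
  fix \<alpha> assume sat_\<psi>: "cnf_sat \<alpha> (reduct \<psi> (Eps x))"
  have sat_\<phi>: "cnf_sat (\<alpha>(x := b)) \<phi>" for b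
    using assms(1) cnf_sat_fun_upd_reduct_Eps[OF sat_\<psi>] unfolding entails_def by blast
  show "cnf_sat \<alpha> (reduct \<phi> (Eps x))"
    unfolding cnf_sat_def
  proof
    fix D assume "D \<in> reduct \<phi> (Eps x)"
    then obtain C where C: "C \<in> \<phi>" "D = C - {Pos x, Neg x}" by auto
    show "\<exists>m\<in>D. lit_sat \<alpha> m"
    proof (rule ccontr)
      assume unsat_D: "\<not> (\<exists>m\<in>D. lit_sat \<alpha> m)"
      have only_x: "m \<in> {Pos x, Neg x}" if "m \<in> C" "lit_sat (\<alpha>(x := b)) m" for m b
      proof (rule ccontr)
        assume "m \<notin> {Pos x, Neg x}"
        with that have "m \<in> D" "lit_sat \<alpha> m"
          using C(2) by (simp_all add: lit_sat_fun_upd_notin)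
        with unsat_D show False by blast
      qed
      obtain m1 where m1: "m1 \<in> C" "lit_sat (\<alpha>(x := True)) m1"
        using sat_\<phi>[of True] C(1) unfolding cnf_sat_def by blast
      obtain m2 where m2: "m2 \<in> C" "lit_sat (\<alpha>(x := False)) m2"
        using sat_\<phi>[of False] C(1) unfolding cnf_sat_def by blast
      have "m1 = Pos x" "m2 = Neg x"
        using only_x[OF m1] only_x[OF m2] m1(2) m2(2) by auto
      with m1(1) m2(1) have "tautological C"
        unfolding tautological_def by blast
      with non_taut C(1) show False by blast
    qed
  qed
qed

lemma entails_reduct:
  assumes "\<psi> \<Turnstile> \<phi>" and "\<forall>C\<in>\<phi>. \<not> tautological C"
  shows "reduct \<psi> y \<Turnstile> reduct \<phi> y"
proof (cases y)
  case (Lit l)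
  then show ?thesis using entails_reduct_Lit[OF assms(1)] by simp
next
  case (Eps x)
  then show ?thesis using entails_reduct_Eps[OF assms] by simp
qed

lemma reduct_non_tautological:
  "\<forall>C\<in>\<phi>. \<not> tautological C \<Longrightarrow> \<forall>C\<in>reduct \<phi> y. \<not> tautological C"
  by (cases y) (auto simp: tautological_def)

lemma entails_reduct_list:
  assumes "\<psi> \<Turnstile> \<phi>" and "\<forall>C\<in>\<phi>. \<not> tautological C"
  shows "reduct_list \<psi> ys \<Turnstile> reduct_list \<phi> ys"
  using assms
proof (induction ys arbitrary: \<psi> \<phi>)
  case Nil
  then show ?case by (simp add: reduct_list_def)
next
  case (Cons y ys)
  have "reduct_list (reduct \<psi> y) ys \<Turnstile> reduct_list (reduct \<phi> y) ys"
    using Cons.prems by (intro Cons.IH entails_reduct reduct_non_tautological)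
  then show ?case by (simp add: reduct_list_def)
qed

theorem mainTheorem6:
  fixes \<psi> \<phi> :: "'v cnf" and X :: "'v set"
  assumes "cnf_formula \<psi>" and "cnf_formula \<phi>"
    and "\<forall>C\<in>\<psi>. \<not> tautological C" and "\<forall>C\<in>\<phi>. \<not> tautological C"
    and "X \<subseteq> vars \<psi> \<union> vars \<phi>"
    and "\<psi> \<Turnstile> \<phi>"
  shows "\<forall>Y\<in>A3 X. \<forall>ys. distinct ys \<and> set ys = Y \<longrightarrow>
           reduct_list \<psi> ys \<Turnstile> reduct_list \<phi> ys"
  using entails_reduct_list[OF assms(6,4)] by blast

end
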